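(* Let $n,k,\ell\ge1$ and let $P$ be an $(n,k,\ell)$ correlation problem with input distribution $\mu$. Suppose that for some $\delta$ with $0\le\delta\le1$ and some $r\ge0$, every rectangle $R=R_1\times\cdots\times R_n\subseteq\{1,\ldots,k\}^n$ with $\mathrm{adv}_a(R)\ge\delta$ satisfies $\mu(R)\le r$, for every $a\in\{1,\ldots,\ell\}^n$. Then every classical model with shared randomness in which $c$ bits are broadcast, having detection efficiency $\eta$ and error probability $\epsilon$, satisfies \[ \frac{1}{2^c}\,\eta^n\Big(1-\epsilon\,\frac{1}{1-\delta}\Big)\le \ell^n r . \]
   Context: An $(n,k,\ell)$ correlation problem with input distribution $\mu$ (a probability distribution on $\{1,\ldots,k\}^n$) is a family of probability distributions $P(\cdot|x)$ on outputs $a\in\{1,\ldots,\ell\}^n$, one for each input $x$ with $\mu(x)>0$. For $a\in\{1,\ldots,\ell\}^n$ let $\mathrm{adm}_a=\{x:P(a|x)>0\}$, and for a set $S$ of inputs let $\mathrm{adv}_a(S)=\mu(S\cap\mathrm{adm}_a)/\mu(S)$. A deterministic classical model with communication is a rooted protocol tree: each internal node is labeled by a party who broadcasts which child to go to, according to a partition of that party's input set $\{1,\ldots,k\}$ among the outgoing edges; each leaf $v$ carries local output functions $\lambda_{v,i}$ from $\{1,\ldots,k\}$ to $\{1,\ldots,\ell\}\cup\{\perp\}$ ($\perp$ = no detector click); on input $x$ the execution follows the tree to a leaf $v$ and party $i$ outputs $\lambda_{v,i}(x_i)$. The number of bits broadcast is $c=\sum\lceil\log t_j\rceil$, the $t_j$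 being the numbers of children of the nodes on the path taken (maximized over paths). A classical model with shared randomness is a probability distribution over such deterministic models, inducing output probabilities $Q(a|x)$. Let $C$ be the indicator that all outputs differ from $\perp$; the detection efficiency is $\eta=(\mathbb E_{x\sim\mu}[\sum_aQ(a|x)C])^{1/n}$; with $F$ the indicator of $P(a|x)=0$, the error probability is $\epsilon=\mathbb E_{x\sim\mu}[\sum_aQ(a|x)\,F\,C/\eta^n]$. *)

theory Defs
  imports "HOL-Probability.Probability"
begin

text \<open>Parties are indexed by 0..<n.
  An output with possible non-clicks is an element of ({1..l} + bottom)^n,
  with bottom represented by None.\<close>

definition inputs :: "nat \<Rightarrow> nat \<Rightarrow> (nat \<Rightarrow> nat) set" where
  "inputs n k = PiE {..<n} (\<lambda>_. {1..k})"

definition outputs :: "nat \<Rightarrow> nat \<Rightarrow> (nat \<Rightarrow> nat) set" where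
  "outputs n l = PiE {..<n} (\<lambda>_. {1..l})"

definition click_outputs :: "nat \<Rightarrow> nat \<Rightarrow> (nat \<Rightarrow> nat option) set" where
  "click_outputs n l = PiE {..<n} (\<lambda>_. insert None (Some ` {1..l}))"

definition input_distribution :: "nat \<Rightarrow> nat \<Rightarrow> ((nat \<Rightarrow> nat) \<Rightarrow> real) \<Rightarrow> bool" where
  "input_distribution n k \<mu> \<longleftrightarrow>
     (\<forall>x\<in>inputs n k. 0 \<le> \<mu> x) \<and> (\<Sum>x\<in>inputs n k. \<mu> x) = 1"

text \<open>P a x = P(a|x); for each input x with mu(x) > 0, P(.|x) is a probability
  distribution on {1..l}^n.\<close>
definition correlation_problem ::
  "nat \<Rightarrow> nat \<Rightarrow> nat \<Rightarrow> ((nat \<Rightarrow> nat) \<Rightarrow> real) \<Rightarrow> ((nat \<Rightarrow> nat) \<Rightarrow> (nat \<Rightarrow> nat) \<Rightarrow> real) \<Rightarrow> bool" where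
  "correlation_problem n k l \<mu> P \<longleftrightarrow> input_distribution n k \<mu> \<and>
     (\<forall>x\<in>inputs n k. 0 < \<mu> x \<longrightarrow>
        (\<forall>a\<in>outputs n l. 0 \<le> P a x) \<and> (\<Sum>a\<in>outputs n l. P a x) = 1)"

definition mu_set :: "((nat \<Rightarrow> nat) \<Rightarrow> real) \<Rightarrow> (nat \<Rightarrow> nat) set \<Rightarrow> real" where
  "mu_set \<mu> S = (\<Sum>x\<in>S. \<mu> x)"

definition adm :: "nat \<Rightarrow> nat \<Rightarrow> ((nat \<Rightarrow> nat) \<Rightarrow> (nat \<Rightarrow> nat) \<Rightarrow> real) \<Rightarrow> (nat \<Rightarrow> nat) \<Rightarrow> (nat \<Rightarrow> nat) set" where
  "adm n k P a = {x \<in> inputs n k. P a x > 0}"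

definition adv :: "nat \<Rightarrow> nat \<Rightarrow> ((nat \<Rightarrow> nat) \<Rightarrow> real) \<Rightarrow> ((nat \<Rightarrow> nat) \<Rightarrow> (nat \<Rightarrow> nat) \<Rightarrow> real)
                    \<Rightarrow> (nat \<Rightarrow> nat) \<Rightarrow> (nat \<Rightarrow> nat) set \<Rightarrow> real" where
  "adv n k \<mu> P a S = mu_set \<mu> (S \<inter> adm n k P a) / mu_set \<mu> S"

definition rectangle :: "nat \<Rightarrow> (nat \<Rightarrow> nat set) \<Rightarrow> (nat \<Rightarrow> nat) set" where
  "rectangle n Rs = PiE {..<n} Rs"

text \<open>Node i t f g: internal node labelled by party i with t children g 0, ..., g (t-1);
  party i's input value v selects child f v.  Leaf \<lambda>: party i outputs \<lambda> i (x i),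
  where None stands for bottom (no detector click).\<close>
datatype proto = Leaf "nat \<Rightarrow> nat \<Rightarrow> nat option" | Node nat nat "nat \<Rightarrow> nat" "nat \<Rightarrow> proto"

primrec run :: "proto \<Rightarrow> (nat \<Rightarrow> nat) \<Rightarrow> nat \<Rightarrow> nat option" where
  "run (Leaf lam) x = (\<lambda>i. lam i (x i))"
| "run (Node i t f g) x = run (g (f (x i))) x"

primrec bits :: "proto \<Rightarrow> nat" where
  "bits (Leaf lam) = 0"
| "bits (Node i t f g) = nat \<lceil>log 2 (real t)\<rceil> + Max ((\<lambda>j. bits (g j)) ` {..<t})"

text \<open>Well-formed protocol: node labels are parties, the outgoing edges of a node
  correspond to a partition of {1..k} (into nonempty blocks indexed 0..<t), and
  leaf output functions take values in {1..l} or bottom.\<close>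
inductive valid_proto :: "nat \<Rightarrow> nat \<Rightarrow> nat \<Rightarrow> proto \<Rightarrow> bool" for n k l where
  leaf: "(\<forall>i<n. \<forall>v\<in>{1..k}. lam i v \<in> insert None (Some ` {1..l}))
          \<Longrightarrow> valid_proto n k l (Leaf lam)"
| node: "i < n \<Longrightarrow> f ` {1..k} = {..<t} \<Longrightarrow> (\<forall>j<t. valid_proto n k l (g j))
          \<Longrightarrow> valid_proto n k l (Node i t f g)"

text \<open>A classical model is a (discrete) probability distribution M over deterministic
  protocol trees.  Its output on input x, restricted to the n parties:\<close>
definition mout :: "nat \<Rightarrow> proto \<Rightarrow> (nat \<Rightarrow> nat) \<Rightarrow> nat \<Rightarrow> nat option" where
  "mout n T x = restrict (run T x) {..<n}"

definition Q :: "nat \<Rightarrow> proto pmf \<Rightarrow> (nat \<Rightarrow> nat option) \<Rightarrow> (nat \<Rightarrow> nat) \<Rightarrow> real" where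
  "Q n M w x = pmf (map_pmf (\<lambda>T. mout n T x) M) w"

definition clicked :: "nat \<Rightarrow> (nat \<Rightarrow> nat option) \<Rightarrow> bool" where
  "clicked n w \<longleftrightarrow> (\<forall>i<n. w i \<noteq> None)"

definition the_out :: "nat \<Rightarrow> (nat \<Rightarrow> nat option) \<Rightarrow> nat \<Rightarrow> nat" where
  "the_out n w = restrict (\<lambda>i. the (w i)) {..<n}"

definition efficiency :: "nat \<Rightarrow> nat \<Rightarrow> nat \<Rightarrow> ((nat \<Rightarrow> nat) \<Rightarrow> real) \<Rightarrow> proto pmf \<Rightarrow> real" where
  "efficiency n k l \<mu> M = root n (\<Sum>x\<in>inputs n k. \<mu> x *
      (\<Sum>w\<in>click_outputs n l. Q n M w x * (if clicked n w then 1 else 0)))"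

definition error_prob :: "nat \<Rightarrow> nat \<Rightarrow> nat \<Rightarrow> ((nat \<Rightarrow> nat) \<Rightarrow> real)
     \<Rightarrow> ((nat \<Rightarrow> nat) \<Rightarrow> (nat \<Rightarrow> nat) \<Rightarrow> real) \<Rightarrow> proto pmf \<Rightarrow> real" where
  "error_prob n k l \<mu> P M = (\<Sum>x\<in>inputs n k. \<mu> x *
      (\<Sum>w\<in>click_outputs n l. Q n M w x *
          (if P (the_out n w) x = 0 then 1 else 0) * (if clicked n w then 1 else 0)))
      / (efficiency n k l \<mu> M) ^ n"

end

theory Submission
  imports Defs
begin

(* A deterministic protocol splits the inputs into at most 2^c leaf rectangles (a node with t
   children costs ceil(log t) bits, and t <= 2^ceil(log t)); inside a leaf, the inputs on which
   every party clicks and the output is a again form a rectangle R. For each such R the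
   hypothesis gives mu(R) <= r + K mu(R - adm_a) with K = 1/(1 - delta): either adv_a(R) >= delta,
   or the inadmissible part of R carries at least the fraction 1 - delta of its mass. Summing
   over the leaves and the l^n outputs bounds the clicked mass of the protocol by 2^c l^n r plus
   K times its erroneous mass; averaged over the shared randomness this is
   eta^n <= 2^c l^n r + K eta^n epsilon. For delta = 1 and epsilon = 0 the erroneous mass
   vanishes, so any K will do for which a rectangle containing an inadmissible input of positive
   weight satisfies the bound trivially, e.g. the reciprocal of the least positive weight. *)

lemma finite_inputs: "finite (inputs n k)"
  unfolding inputs_def by (rule finite_PiE) auto

lemma finite_outputs: "finite (outputs n l)"
  unfolding outputs_def by (rule finite_PiE) auto

lemma card_outputs: "card (outputs n l) = l ^ n"
  by (simp add: outputs_def card_PiE)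

lemma finite_click_outputs: "finite (click_outputs n l)"
  unfolding click_outputs_def by (rule finite_PiE) auto

lemma rectangle_subset_inputs: "\<forall>i<n. Rs i \<subseteq> {1..k} \<Longrightarrow> rectangle n Rs \<subseteq> inputs n k"
  unfolding rectangle_def inputs_def by (auto simp: PiE_iff)

lemma finite_rectangle: "\<forall>i<n. Rs i \<subseteq> {1..k} \<Longrightarrow> finite (rectangle n Rs)"
  using finite_inputs rectangle_subset_inputs finite_subset by metis

lemma rectangle_fibre:
  assumes "i < n"
  shows "{x \<in> rectangle n Ds. f (x i) = j} = rectangle n (Ds(i := {v \<in> Ds i. f v = j}))"
  using assms by (force simp: rectangle_def PiE_iff extensional_def split: if_splits)

lemma mu_set_fibres:
  assumes "finite S" "finite T" "g ` S \<subseteq> T"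
  shows "mu_set \<mu> S = (\<Sum>y\<in>T. mu_set \<mu> {x \<in> S. g x = y})"
  unfolding mu_set_def using assms by (rule sum.group[symmetric])

lemma mu_set_Collect: "finite D \<Longrightarrow> mu_set \<mu> {x \<in> D. C x} = (\<Sum>x\<in>D. \<mu> x * of_bool (C x))"
  by (simp add: mu_set_def Collect_conj_eq)

lemma mu_set_nonneg: "input_distribution n k \<mu> \<Longrightarrow> S \<subseteq> inputs n k \<Longrightarrow> 0 \<le> mu_set \<mu> S"
  unfolding mu_set_def input_distribution_def by (auto intro: sum_nonneg)

lemma mu_set_le_one: "input_distribution n k \<mu> \<Longrightarrow> S \<subseteq> inputs n k \<Longrightarrow> mu_set \<mu> S \<le> 1"
  using sum_mono2[OF finite_inputs, of S n k \<mu>]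
  unfolding mu_set_def input_distribution_def by auto

lemma mu_set_split_adm:
  assumes corr: "correlation_problem n k l \<mu> P" and a: "a \<in> outputs n l"
    and R: "R \<subseteq> inputs n k"
  shows "mu_set \<mu> R = mu_set \<mu> (R \<inter> adm n k P a) + mu_set \<mu> {x \<in> R. P a x = 0}"
proof -
  have finR: "finite R" using R finite_inputs finite_subset by blast
  have "\<mu> x = \<mu> x * of_bool (0 < P a x) + \<mu> x * of_bool (P a x = 0)" if "x \<in> R" for x
  proof (cases "\<mu> x = 0")
    case False
    then have "0 < \<mu> x"
      using that R corr by (force simp: correlation_problem_def input_distribution_def)
    then have "0 \<le> P a x" using that R corr a by (auto simp: correlation_problem_def)
    then show ?thesis by auto
  qed simp
  then have "mu_set \<mu> R = (\<Sum>x\<in>R. \<mu> x * of_bool (0 < P a x) + \<mu> x * of_bool (P a x = 0))"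
    unfolding mu_set_def by (rule sum.cong[OF refl])
  moreover have "R \<inter> adm n k P a = {x \<in> R. 0 < P a x}" using R by (auto simp: adm_def)
  ultimately show ?thesis
    by (simp only: mu_set_Collect[OF finR] sum.distrib)
qed

definition rectangle_bound ::
  "nat \<Rightarrow> nat \<Rightarrow> nat \<Rightarrow> ((nat \<Rightarrow> nat) \<Rightarrow> real) \<Rightarrow> ((nat \<Rightarrow> nat) \<Rightarrow> (nat \<Rightarrow> nat) \<Rightarrow> real)
     \<Rightarrow> real \<Rightarrow> real \<Rightarrow> bool"
where
  "rectangle_bound n k l \<mu> P r K \<longleftrightarrow>
     (\<forall>a\<in>outputs n l. \<forall>Rs. (\<forall>i<n. Rs i \<subseteq> {1..k}) \<longrightarrow>
        mu_set \<mu> (rectangle n Rs) \<le> r + K * mu_set \<mu> {x \<in> rectangle n Rs. P a x = 0})"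
  \<comment> \<open>the last set stands for R - adm_a; the two differ only by inputs of weight zero\<close>

lemma rectangle_bound_of_adv_less_one:
  assumes corr: "correlation_problem n k l \<mu> P" and \<delta>: "\<delta> < 1" and r: "0 \<le> r"
    and rect: "\<forall>a\<in>outputs n l. \<forall>Rs. (\<forall>i<n. Rs i \<subseteq> {1..k}) \<longrightarrow>
                 adv n k \<mu> P a (rectangle n Rs) \<ge> \<delta> \<longrightarrow> mu_set \<mu> (rectangle n Rs) \<le> r"
  shows "rectangle_bound n k l \<mu> P r (1 / (1 - \<delta>))"
  unfolding rectangle_bound_def
proof (intro ballI allI impI)
  fix a Rs assume a: "a \<in> outputs n l" and Rs: "\<forall>i<n. Rs i \<subseteq> {1..k}"
  define R where "R = rectangle n Rs"
  define m where "m = mu_set \<mu> R"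
  define e where "e = mu_set \<mu> {x \<in> R. P a x = 0}"
  have R: "R \<subseteq> inputs n k" using rectangle_subset_inputs[OF Rs] by (simp add: R_def)
  have dist: "input_distribution n k \<mu>" using corr by (simp add: correlation_problem_def)
  have split: "m = mu_set \<mu> (R \<inter> adm n k P a) + e"
    using mu_set_split_adm[OF corr a R] by (simp add: m_def e_def)
  have "0 \<le> e" unfolding e_def using R by (intro mu_set_nonneg[OF dist]) auto
  have "m \<le> r + e / (1 - \<delta>)"
  proof (cases "\<delta> \<le> adv n k \<mu> P a R")
    case True
    then have "m \<le> r" using rect a Rs by (simp add: R_def m_def)
    then show ?thesis using divide_nonneg_pos[OF \<open>0 \<le> e\<close>, of "1 - \<delta>"] \<delta> by simp
  next
    case False
    have "(1 - \<delta>) * m \<le> e"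
    proof (cases "m = 0")
      case False
      then have "0 < m" using mu_set_nonneg[OF dist R] by (simp add: m_def)
      moreover have "mu_set \<mu> (R \<inter> adm n k P a) / m < \<delta>"
        using \<open>\<not> \<delta> \<le> adv n k \<mu> P a R\<close> by (simp add: adv_def m_def)
      ultimately show ?thesis using split by (simp add: divide_less_eq algebra_simps)
    qed (simp add: \<open>0 \<le> e\<close>)
    then have "m \<le> e / (1 - \<delta>)" using \<delta> by (simp add: le_divide_eq mult.commute)
    then show ?thesis using r by simp
  qed
  then show "mu_set \<mu> (rectangle n Rs)
      \<le> r + 1 / (1 - \<delta>) * mu_set \<mu> {x \<in> rectangle n Rs. P a x = 0}"
    by (simp add: R_def m_def e_def)
qed

lemma finite_positive_lower_bound:
  fixes f :: "'a \<Rightarrow> real"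
  assumes "finite A"
  shows "\<exists>m>0. \<forall>x\<in>A. 0 < f x \<longrightarrow> m \<le> f x"
  using assms by (intro exI[of _ "Min (insert 1 (f ` {x \<in> A. 0 < f x}))"]) auto

lemma rectangle_bound_of_adv_one:
  assumes corr: "correlation_problem n k l \<mu> P" and r: "0 \<le> r"
    and rect: "\<forall>a\<in>outputs n l. \<forall>Rs. (\<forall>i<n. Rs i \<subseteq> {1..k}) \<longrightarrow>
                 adv n k \<mu> P a (rectangle n Rs) \<ge> 1 \<longrightarrow> mu_set \<mu> (rectangle n Rs) \<le> r"
  shows "\<exists>K. rectangle_bound n k l \<mu> P r K"
proof -
  obtain m where m: "0 < m" "\<forall>x\<in>inputs n k. 0 < \<mu> x \<longrightarrow> m \<le> \<mu> x"
    using finite_positive_lower_bound[of "inputs n k" \<mu>] finite_inputs by blast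
  have dist: "input_distribution n k \<mu>" using corr by (simp add: correlation_problem_def)
  have "rectangle_bound n k l \<mu> P r (1 / m)"
    unfolding rectangle_bound_def
  proof (intro ballI allI impI)
    fix a Rs assume a: "a \<in> outputs n l" and Rs: "\<forall>i<n. Rs i \<subseteq> {1..k}"
    define R where "R = rectangle n Rs"
    define e where "e = mu_set \<mu> {x \<in> R. P a x = 0}"
    have R: "R \<subseteq> inputs n k" using rectangle_subset_inputs[OF Rs] by (simp add: R_def)
    have "mu_set \<mu> R \<le> r + e / m"
    proof (cases "e = 0")
      case True
      then have "mu_set \<mu> R = 0 \<or> adv n k \<mu> P a R = 1"
        using mu_set_split_adm[OF corr a R] by (simp add: adv_def e_def)
      then show ?thesis using rect a Rs r True by (auto simp: R_def)
    next
      case False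
      then obtain x where x: "x \<in> {x \<in> R. P a x = 0}" "\<mu> x \<noteq> 0"
        unfolding e_def mu_set_def by (meson sum.neutral)
      have "x \<in> inputs n k" using x(1) R by blast
      then have "0 \<le> \<mu> x" using dist by (simp add: input_distribution_def)
      then have "m \<le> \<mu> x" using m(2) x(2) \<open>x \<in> inputs n k\<close> by simp
      also have "\<mu> x \<le> e"
        unfolding e_def mu_set_def using x R dist finite_subset[OF R finite_inputs]
        by (intro member_le_sum) (auto simp: input_distribution_def)
      finally have "1 \<le> e / m" using m(1) by simp
      then show ?thesis using mu_set_le_one[OF dist R] r by simp
    qed
    then show "mu_set \<mu> (rectangle n Rs)
        \<le> r + 1 / m * mu_set \<mu> {x \<in> rectangle n Rs. P a x = 0}"
      by (simp add: R_def e_def)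
  qed
  then show ?thesis ..
qed

lemma mout_in_click_outputs:
  assumes "valid_proto n k l T" "x \<in> inputs n k"
  shows "mout n T x \<in> click_outputs n l"
  using assms
proof (induction T rule: valid_proto.induct)
  case (leaf lam)
  then show ?case
    by (auto simp: mout_def click_outputs_def inputs_def PiE_iff extensional_def)
next
  case (node i f t g)
  have "x i \<in> {1..k}" using node.prems node.hyps(1) by (auto simp: inputs_def PiE_iff)
  then have "f (x i) < t" using node.hyps(2) by auto
  then show ?case using node.IH node.prems by (simp add: mout_def)
qed

lemma the_out_in_outputs: "w \<in> click_outputs n l \<Longrightarrow> clicked n w \<Longrightarrow> the_out n w \<in> outputs n l"
  by (force simp: click_outputs_def clicked_def the_out_def outputs_def PiE_iff)

definition clicked_inputs :: "nat \<Rightarrow> (nat \<Rightarrow> nat) set \<Rightarrow> proto \<Rightarrow> (nat \<Rightarrow> nat) set" where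
  "clicked_inputs n D T = {x \<in> D. clicked n (mout n T x)}"

definition error_inputs ::
  "nat \<Rightarrow> ((nat \<Rightarrow> nat) \<Rightarrow> (nat \<Rightarrow> nat) \<Rightarrow> real) \<Rightarrow> (nat \<Rightarrow> nat) set \<Rightarrow> proto \<Rightarrow> (nat \<Rightarrow> nat) set"
where
  "error_inputs n P D T = {x \<in> D. clicked n (mout n T x) \<and> P (the_out n (mout n T x)) x = 0}"

lemma leaf_output_iff:
  assumes "a \<in> outputs n l"
  shows "clicked n (mout n (Leaf lam) x) \<and> the_out n (mout n (Leaf lam) x) = a
     \<longleftrightarrow> (\<forall>i<n. lam i (x i) = Some (a i))"
  using assms by (force simp: clicked_def the_out_def mout_def outputs_def PiE_iff extensional_def)

lemma leaf_mass_bound: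
  assumes lam: "\<forall>i<n. \<forall>v\<in>{1..k}. lam i v \<in> insert None (Some ` {1..l})"
    and Ds: "\<forall>i<n. Ds i \<subseteq> {1..k}"
    and bound: "rectangle_bound n k l \<mu> P r K"
  shows "mu_set \<mu> (clicked_inputs n (rectangle n Ds) (Leaf lam))
     \<le> real l ^ n * r + K * mu_set \<mu> (error_inputs n P (rectangle n Ds) (Leaf lam))"
proof -
  define S where "S = clicked_inputs n (rectangle n Ds) (Leaf lam)"
  define E where "E = error_inputs n P (rectangle n Ds) (Leaf lam)"
  define out where "out x = the_out n (mout n (Leaf lam) x)" for x
  define Rs where "Rs a i = {v \<in> Ds i. lam i v = Some (a i)}" for a i
  have Rs_sub: "\<forall>i<n. Rs a i \<subseteq> {1..k}" for a using Ds by (auto simp: Rs_def)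
  have finS: "finite S" and finE: "finite E"
    using finite_rectangle[OF Ds] by (auto simp: S_def E_def clicked_inputs_def error_inputs_def)
  have out_S: "out ` S \<subseteq> outputs n l"
  proof
    fix w assume "w \<in> out ` S"
    then obtain x where x: "x \<in> rectangle n Ds" "clicked n (mout n (Leaf lam) x)" "w = out x"
      by (auto simp: S_def clicked_inputs_def)
    have "x \<in> inputs n k" using x(1) rectangle_subset_inputs[OF Ds] by blast
    then have "mout n (Leaf lam) x \<in> click_outputs n l"
      using lam by (intro mout_in_click_outputs valid_proto.leaf)
    then show "w \<in> outputs n l" using x(2,3) by (simp add: out_def the_out_in_outputs)
  qed
  then have out_E: "out ` E \<subseteq> outputs n l"
    by (auto simp: S_def E_def clicked_inputs_def error_inputs_def out_def)
  have fibre_S: "{x \<in> S. out x = a} = rectangle n (Rs a)" if "a \<in> outputs n l" for a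
    using leaf_output_iff[OF that, of lam] Ds
    by (auto simp: S_def clicked_inputs_def out_def Rs_def rectangle_def PiE_iff extensional_def)
  have fibre_E: "{x \<in> E. out x = a} = {x \<in> rectangle n (Rs a). P a x = 0}"
    if "a \<in> outputs n l" for a
    using fibre_S[OF that] by (auto simp: S_def E_def clicked_inputs_def error_inputs_def out_def)
  have "mu_set \<mu> S = (\<Sum>a\<in>outputs n l. mu_set \<mu> (rectangle n (Rs a)))"
    using mu_set_fibres[OF finS _ out_S] fibre_S by (simp add: finite_outputs)
  also have "\<dots> \<le> (\<Sum>a\<in>outputs n l.
                       r + K * mu_set \<mu> {x \<in> rectangle n (Rs a). P a x = 0})"
    using bound Rs_sub by (intro sum_mono) (auto simp: rectangle_bound_def)
  also have "\<dots> = real l ^ n * r + K * mu_set \<mu> E"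
    using mu_set_fibres[OF finE _ out_E] fibre_E
    by (simp add: sum.distrib sum_distrib_left card_outputs finite_outputs)
  finally show ?thesis by (simp add: S_def E_def)
qed

lemma real_le_two_pow_ceiling_log: "1 \<le> t \<Longrightarrow> real t \<le> 2 ^ nat \<lceil>log 2 (real t)\<rceil>"
proof -
  assume "1 \<le> t"
  then have "real t = 2 powr (log 2 (real t))" by simp
  also have "\<dots> \<le> 2 powr (real (nat \<lceil>log 2 (real t)\<rceil>))"
    by (intro powr_mono) (auto, linarith)
  also have "\<dots> = 2 ^ nat \<lceil>log 2 (real t)\<rceil>" by (simp add: powr_realpow)
  finally show ?thesis .
qed

lemma sum_children_pow_bits_le: "(\<Sum>j<t. (2::real) ^ bits (g j)) \<le> 2 ^ bits (Node i t f g)"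
proof (cases "t = 0")
  case False
  define m where "m = Max ((\<lambda>j. bits (g j)) ` {..<t})"
  have "(\<Sum>j<t. (2::real) ^ bits (g j)) \<le> (\<Sum>j<t. 2 ^ m)"
    by (intro sum_mono power_increasing) (auto simp: m_def)
  also have "\<dots> = real t * 2 ^ m" by simp
  also have "\<dots> \<le> 2 ^ nat \<lceil>log 2 (real t)\<rceil> * 2 ^ m"
    using False by (intro mult_right_mono real_le_two_pow_ceiling_log) auto
  also have "\<dots> = 2 ^ bits (Node i t f g)" by (simp add: m_def power_add)
  finally show ?thesis .
qed simp

lemma node_inputs_fibres:
  assumes "i < n"
  shows "{x \<in> clicked_inputs n (rectangle n Ds) (Node i t f g). f (x i) = j}
           = clicked_inputs n (rectangle n (Ds(i := {v \<in> Ds i. f v = j}))) (g j)"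
    and "{x \<in> error_inputs n P (rectangle n Ds) (Node i t f g). f (x i) = j}
           = error_inputs n P (rectangle n (Ds(i := {v \<in> Ds i. f v = j}))) (g j)"
  by (auto simp: clicked_inputs_def error_inputs_def rectangle_fibre[OF assms, symmetric] mout_def)

lemma protocol_mass_bound:
  assumes "valid_proto n k l T" and bound: "rectangle_bound n k l \<mu> P r K" and r: "0 \<le> r"
    and "\<forall>i<n. Ds i \<subseteq> {1..k}"
  shows "mu_set \<mu> (clicked_inputs n (rectangle n Ds) T)
     \<le> 2 ^ bits T * (real l ^ n * r) + K * mu_set \<mu> (error_inputs n P (rectangle n Ds) T)"
  using assms(1,4)
proof (induction T arbitrary: Ds rule: valid_proto.induct)
  case (leaf lam)
  then show ?case using leaf_mass_bound[OF _ _ bound] by simp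
next
  case (node i f t g)
  define Dj where "Dj j = Ds(i := {v \<in> Ds i. f v = j})" for j
  define S where "S = clicked_inputs n (rectangle n Ds) (Node i t f g)"
  define E where "E = error_inputs n P (rectangle n Ds) (Node i t f g)"
  define L where "L = real l ^ n * r"
  have finS: "finite S" and finE: "finite E"
    using finite_rectangle[OF node.prems]
    by (auto simp: S_def E_def clicked_inputs_def error_inputs_def)
  have "f (x i) \<in> {..<t}" if "x \<in> rectangle n Ds" for x
    using that node.prems node.hyps(1,2) by (force simp: rectangle_def PiE_iff)
  then have branch_S: "(\<lambda>x. f (x i)) ` S \<subseteq> {..<t}"
    and branch_E: "(\<lambda>x. f (x i)) ` E \<subseteq> {..<t}"
    by (auto simp: S_def E_def clicked_inputs_def error_inputs_def)
  have "mu_set \<mu> S = (\<Sum>j<t. mu_set \<mu> (clicked_inputs n (rectangle n (Dj j)) (g j)))"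
    using mu_set_fibres[OF finS _ branch_S] node_inputs_fibres(1)[OF node.hyps(1)]
    by (simp add: S_def Dj_def)
  also have "\<dots> \<le> (\<Sum>j<t. 2 ^ bits (g j) * L
                       + K * mu_set \<mu> (error_inputs n P (rectangle n (Dj j)) (g j)))"
  proof (intro sum_mono)
    fix j assume "j \<in> {..<t}"
    moreover have "\<forall>i'<n. Dj j i' \<subseteq> {1..k}" using node.prems by (auto simp: Dj_def)
    ultimately show "mu_set \<mu> (clicked_inputs n (rectangle n (Dj j)) (g j))
        \<le> 2 ^ bits (g j) * L + K * mu_set \<mu> (error_inputs n P (rectangle n (Dj j)) (g j))"
      using node.IH by (simp add: L_def)
  qed
  also have "\<dots> = (\<Sum>j<t. (2::real) ^ bits (g j)) * L + K * mu_set \<mu> E"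
    using mu_set_fibres[OF finE _ branch_E] node_inputs_fibres(2)[OF node.hyps(1)]
    by (simp add: E_def Dj_def sum.distrib sum_distrib_left sum_distrib_right)
  also have "\<dots> \<le> 2 ^ bits (Node i t f g) * L + K * mu_set \<mu> E"
    using sum_children_pow_bits_le r by (simp add: L_def mult_right_mono)
  finally show ?case by (simp add: S_def E_def L_def)
qed

lemma sum_Q_eq_expectation:
  assumes "\<forall>T\<in>set_pmf M. valid_proto n k l T" "x \<in> inputs n k"
  shows "(\<Sum>w\<in>click_outputs n l. Q n M w x * h w)
       = measure_pmf.expectation M (\<lambda>T. h (mout n T x))"
proof -
  have "measure_pmf.expectation M (\<lambda>T. h (mout n T x))
      = measure_pmf.expectation (map_pmf (\<lambda>T. mout n T x) M) h" by simp
  also have "\<dots> = (\<Sum>w\<in>click_outputs n l. pmf (map_pmf (\<lambda>T. mout n T x) M) w *\<^sub>R h w)"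
    by (rule integral_measure_pmf[OF finite_click_outputs])
      (use assms mout_in_click_outputs in auto)
  finally show ?thesis by (simp add: Q_def)
qed

lemma integrable_pmf_of_bool: "integrable (measure_pmf M) (\<lambda>T. of_bool (C T) :: real)"
  by (rule measure_pmf.integrable_const_bound[where B = 1]) auto

lemma integrable_mu_set_Collect:
  assumes "finite D"
  shows "integrable (measure_pmf M) (\<lambda>T. mu_set \<mu> {x \<in> D. C T x})"
  unfolding mu_set_Collect[OF assms]
  by (intro Bochner_Integration.integrable_sum integrable_mult_right integrable_pmf_of_bool)

lemma expectation_mu_set_Collect:
  assumes "finite D"
  shows "measure_pmf.expectation M (\<lambda>T. mu_set \<mu> {x \<in> D. C T x})
     = (\<Sum>x\<in>D. \<mu> x * measure_pmf.expectation M (\<lambda>T. of_bool (C T x)))"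
  unfolding mu_set_Collect[OF assms]
  by (subst Bochner_Integration.integral_sum) (auto intro: integrable_pmf_of_bool)

lemma efficiency_sum_eq_expectation:
  assumes "\<forall>T\<in>set_pmf M. valid_proto n k l T"
  shows "(\<Sum>x\<in>inputs n k. \<mu> x *
            (\<Sum>w\<in>click_outputs n l. Q n M w x * (if clicked n w then 1 else 0)))
       = measure_pmf.expectation M (\<lambda>T. mu_set \<mu> (clicked_inputs n (inputs n k) T))"
  unfolding clicked_inputs_def expectation_mu_set_Collect[OF finite_inputs]
  by (intro sum.cong refl) (simp add: sum_Q_eq_expectation[OF assms] of_bool_def)

lemma error_sum_eq_expectation:
  assumes "\<forall>T\<in>set_pmf M. valid_proto n k l T"
  shows "(\<Sum>x\<in>inputs n k. \<mu> x * (\<Sum>w\<in>click_outputs n l. Q n M w x *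
            (if P (the_out n w) x = 0 then 1 else 0) * (if clicked n w then 1 else 0)))
       = measure_pmf.expectation M (\<lambda>T. mu_set \<mu> (error_inputs n P (inputs n k) T))"
  unfolding error_inputs_def expectation_mu_set_Collect[OF finite_inputs]
  by (intro sum.cong refl)
    (auto simp: sum_Q_eq_expectation[OF assms] mult.assoc intro!: Bochner_Integration.integral_cong)

lemma efficiency_pow_eq:
  assumes "1 \<le> n" "input_distribution n k \<mu>" "\<forall>T\<in>set_pmf M. valid_proto n k l T"
  shows "efficiency n k l \<mu> M ^ n
       = measure_pmf.expectation M (\<lambda>T. mu_set \<mu> (clicked_inputs n (inputs n k) T))"
proof -
  have "0 \<le> (\<Sum>x\<in>inputs n k. \<mu> x *
              (\<Sum>w\<in>click_outputs n l. Q n M w x * (if clicked n w then 1 else 0)))"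
    using assms(2) by (intro sum_nonneg mult_nonneg_nonneg) (auto simp: input_distribution_def Q_def)
  then show ?thesis
    using assms(1) by (simp add: efficiency_def efficiency_sum_eq_expectation[OF assms(3)])
qed

lemma error_prob_eq:
  assumes "\<forall>T\<in>set_pmf M. valid_proto n k l T"
  shows "error_prob n k l \<mu> P M
       = measure_pmf.expectation M (\<lambda>T. mu_set \<mu> (error_inputs n P (inputs n k) T))
         / efficiency n k l \<mu> M ^ n"
  unfolding error_prob_def error_sum_eq_expectation[OF assms] ..

lemma expected_mass_bound:
  assumes model: "\<forall>T\<in>set_pmf M. valid_proto n k l T \<and> bits T \<le> c"
    and bound: "rectangle_bound n k l \<mu> P r K" and r: "0 \<le> r"
  shows "measure_pmf.expectation M (\<lambda>T. mu_set \<mu> (clicked_inputs n (inputs n k) T))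
     \<le> 2 ^ c * (real l ^ n * r)
        + K * measure_pmf.expectation M (\<lambda>T. mu_set \<mu> (error_inputs n P (inputs n k) T))"
proof -
  have inputs_rect: "inputs n k = rectangle n (\<lambda>_. {1..k})" by (simp add: inputs_def rectangle_def)
  have "mu_set \<mu> (clicked_inputs n (inputs n k) T)
      \<le> 2 ^ c * (real l ^ n * r) + K * mu_set \<mu> (error_inputs n P (inputs n k) T)"
    if "T \<in> set_pmf M" for T
  proof -
    have "(2::real) ^ bits T \<le> 2 ^ c" using model that by simp
    then have "(2::real) ^ bits T * (real l ^ n * r) \<le> 2 ^ c * (real l ^ n * r)"
      using r by (intro mult_right_mono) auto
    then show ?thesis
      using protocol_mass_bound[of n k l T \<mu> P r K "\<lambda>_. {1..k}"] model that bound r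
      by (simp add: inputs_rect)
  qed
  moreover have "integrable (measure_pmf M) (\<lambda>T. mu_set \<mu> (clicked_inputs n (inputs n k) T))"
    and int_error: "integrable (measure_pmf M) (\<lambda>T. mu_set \<mu> (error_inputs n P (inputs n k) T))"
    unfolding clicked_inputs_def error_inputs_def
    by (simp_all add: integrable_mu_set_Collect finite_inputs)
  ultimately have "measure_pmf.expectation M (\<lambda>T. mu_set \<mu> (clicked_inputs n (inputs n k) T))
     \<le> measure_pmf.expectation M
          (\<lambda>T. 2 ^ c * (real l ^ n * r) + K * mu_set \<mu> (error_inputs n P (inputs n k) T))"
    by (intro integral_mono_AE AE_pmfI) auto
  also have "\<dots> = 2 ^ c * (real l ^ n * r)
      + K * measure_pmf.expectation M (\<lambda>T. mu_set \<mu> (error_inputs n P (inputs n k) T))"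
    using int_error by simp
  finally show ?thesis .
qed

theorem theorem2:
  fixes n k l :: nat and \<mu> :: "(nat \<Rightarrow> nat) \<Rightarrow> real"
    and P :: "(nat \<Rightarrow> nat) \<Rightarrow> (nat \<Rightarrow> nat) \<Rightarrow> real"
    and \<delta> r :: real and M :: "proto pmf" and c :: nat and \<eta> \<epsilon> :: real
  assumes "n \<ge> 1" "k \<ge> 1" "l \<ge> 1"
    and "correlation_problem n k l \<mu> P"
    and "0 \<le> \<delta>" "\<delta> \<le> 1" "0 \<le> r"
    and rect: "\<forall>a\<in>outputs n l. \<forall>Rs. (\<forall>i<n. Rs i \<subseteq> {1..k}) \<longrightarrow>
                 adv n k \<mu> P a (rectangle n Rs) \<ge> \<delta> \<longrightarrow> mu_set \<mu> (rectangle n Rs) \<le> r"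
    and model: "\<forall>T\<in>set_pmf M. valid_proto n k l T \<and> bits T \<le> c"
    and "\<eta> = efficiency n k l \<mu> M"
    and "\<epsilon> = error_prob n k l \<mu> P M"
  shows "(\<delta> < 1 \<longrightarrow> 1 / 2 ^ c * \<eta> ^ n * (1 - \<epsilon> * (1 / (1 - \<delta>))) \<le> real l ^ n * r)
       \<and> (\<delta> = 1 \<and> \<epsilon> = 0 \<longrightarrow> 1 / 2 ^ c * \<eta> ^ n \<le> real l ^ n * r)"
proof -
  note corr = \<open>correlation_problem n k l \<mu> P\<close>
  have valid: "\<forall>T\<in>set_pmf M. valid_proto n k l T" using model by blast
  define A where "A = measure_pmf.expectation M (\<lambda>T. mu_set \<mu> (clicked_inputs n (inputs n k) T))"
  define E where "E = measure_pmf.expectation M (\<lambda>T. mu_set \<mu> (error_inputs n P (inputs n k) T))"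
  have \<eta>: "\<eta> ^ n = A"
    using efficiency_pow_eq[OF \<open>n \<ge> 1\<close> _ valid] corr
    by (simp add: A_def \<open>\<eta> = _\<close> correlation_problem_def)
  have \<epsilon>: "\<epsilon> = E / A" using error_prob_eq[OF valid] \<eta> by (simp add: E_def \<open>\<epsilon> = _\<close> \<open>\<eta> = _\<close>)
  have main: "1 / 2 ^ c * \<eta> ^ n * (1 - \<epsilon> * K) \<le> real l ^ n * r"
    if "rectangle_bound n k l \<mu> P r K" for K
  proof (cases "A = 0")
    case False
    have "A * (1 - E / A * K) \<le> 2 ^ c * (real l ^ n * r)"
      using expected_mass_bound[OF model that \<open>0 \<le> r\<close>] False
      by (simp add: A_def E_def algebra_simps)
    then show ?thesis by (simp add: \<eta> \<epsilon> divide_le_eq mult.commute)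
  qed (simp add: \<eta> \<open>0 \<le> r\<close>)
  show ?thesis
  proof (intro conjI impI)
    assume "\<delta> < 1"
    then show "1 / 2 ^ c * \<eta> ^ n * (1 - \<epsilon> * (1 / (1 - \<delta>))) \<le> real l ^ n * r"
      using main rectangle_bound_of_adv_less_one[OF corr _ \<open>0 \<le> r\<close> rect] by blast
  next
    assume "\<delta> = 1 \<and> \<epsilon> = 0"
    then obtain K where "rectangle_bound n k l \<mu> P r K"
      using rectangle_bound_of_adv_one[OF corr \<open>0 \<le> r\<close>] rect by blast
    then show "1 / 2 ^ c * \<eta> ^ n \<le> real l ^ n * r"
      using main \<open>\<delta> = 1 \<and> \<epsilon> = 0\<close> by fastforce
  qed
qed

end
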